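(* Let $k$ be a field, $n$ a positive integer, and $\mathcal B\subseteq\{1,\ldots,n\}\times\{1,\ldots,n\}$ such that $(i,i)\in\mathcal B$ for all $i$ and $(i,l)\in\mathcal B$ whenever $(i,j)\in\mathcal B$ and $(j,l)\in\mathcal B$. Then the structural matrix algebra $\mathcal M(\mathcal B,k)$ is a Frobenius algebra if and only if $\mathcal B=(I_1\times I_1)\cup\cdots\cup(I_r\times I_r)$ for some partition $I_1,\ldots,I_r$ of $\{1,\ldots,n\}$. In this case $\mathcal M(\mathcal B,k)\simeq M_{n_1}(k)\times\cdots\times M_{n_r}(k)$, where $n_j=|I_j|$.
   Context: Let $e_{i,j}$ denote the matrix units of $M_n(k)$. The structural matrix algebra associated to $\mathcal B$ is the subalgebra $\mathcal M(\mathcal B,k)=\sum_{(i,j)\in\mathcal B}k e_{i,j}$ of $M_n(k)$, i.e. the matrices whose $(i,j)$-entries vanish for $(i,j)\notin\mathcal B$. A finite dimensional $k$-algebra $A$ is Frobenius if $A\cong A^*$ as left (equivalently right) $A$-modules. *)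

theory Defs
  imports Main
begin

definition dual_space :: "'a set \<Rightarrow> ('a \<Rightarrow> 'a \<Rightarrow> 'a) \<Rightarrow> ('k::field \<Rightarrow> 'a \<Rightarrow> 'a) \<Rightarrow> ('a \<Rightarrow> 'k) set" where
  "dual_space A add sm =
     {f. (\<forall>x\<in>A. \<forall>y\<in>A. f (add x y) = f x + f y)
       \<and> (\<forall>c. \<forall>x\<in>A. f (sm c x) = c * f x)
       \<and> (\<forall>x. x \<notin> A \<longrightarrow> f x = 0)}"

definition dual_lact :: "'a set \<Rightarrow> ('a \<Rightarrow> 'a \<Rightarrow> 'a) \<Rightarrow> 'a \<Rightarrow> ('a \<Rightarrow> 'k::field) \<Rightarrow> ('a \<Rightarrow> 'k)" where
  "dual_lact A mul a f = (\<lambda>x. if x \<in> A then f (mul x a) else 0)"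

definition is_frobenius :: "'a set \<Rightarrow> ('a \<Rightarrow> 'a \<Rightarrow> 'a) \<Rightarrow> ('k::field \<Rightarrow> 'a \<Rightarrow> 'a) \<Rightarrow> ('a \<Rightarrow> 'a \<Rightarrow> 'a) \<Rightarrow> bool" where
  "is_frobenius A add sm mul \<longleftrightarrow>
     (\<exists>\<phi> :: 'a \<Rightarrow> ('a \<Rightarrow> 'k).
        bij_betw \<phi> A (dual_space A add sm)
      \<and> (\<forall>x\<in>A. \<forall>y\<in>A. \<phi> (add x y) = (\<lambda>z. \<phi> x z + \<phi> y z))
      \<and> (\<forall>c. \<forall>x\<in>A. \<phi> (sm c x) = (\<lambda>z. c * \<phi> x z))
      \<and> (\<forall>a\<in>A. \<forall>b\<in>A. \<phi> (mul a b) = dual_lact A mul a (\<phi> b)))"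

definition alg_iso :: "'a set \<Rightarrow> ('a \<Rightarrow> 'a \<Rightarrow> 'a) \<Rightarrow> ('k::field \<Rightarrow> 'a \<Rightarrow> 'a) \<Rightarrow> ('a \<Rightarrow> 'a \<Rightarrow> 'a) \<Rightarrow> 'a
    \<Rightarrow> 'b set \<Rightarrow> ('b \<Rightarrow> 'b \<Rightarrow> 'b) \<Rightarrow> ('k \<Rightarrow> 'b \<Rightarrow> 'b) \<Rightarrow> ('b \<Rightarrow> 'b \<Rightarrow> 'b) \<Rightarrow> 'b \<Rightarrow> bool" where
  "alg_iso A add sm mul one A' add' sm' mul' one' \<longleftrightarrow>
     (\<exists>\<psi>. bij_betw \<psi> A A'
        \<and> (\<forall>x\<in>A. \<forall>y\<in>A. \<psi> (add x y) = add' (\<psi> x) (\<psi> y))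
        \<and> (\<forall>c. \<forall>x\<in>A. \<psi> (sm c x) = sm' c (\<psi> x))
        \<and> (\<forall>x\<in>A. \<forall>y\<in>A. \<psi> (mul x y) = mul' (\<psi> x) (\<psi> y))
        \<and> \<psi> one = one')"

type_synonym 'k mat = "nat \<Rightarrow> nat \<Rightarrow> 'k"

definition madd :: "'k::field mat \<Rightarrow> 'k mat \<Rightarrow> 'k mat" where
  "madd M N = (\<lambda>i j. M i j + N i j)"

definition msmult :: "'k::field \<Rightarrow> 'k mat \<Rightarrow> 'k mat" where
  "msmult c M = (\<lambda>i j. c * M i j)"

definition mmult :: "nat \<Rightarrow> 'k::field mat \<Rightarrow> 'k mat \<Rightarrow> 'k mat" where
  "mmult n M N = (\<lambda>i j. \<Sum>l\<in>{1..n}. M i l * N l j)"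

definition mone :: "nat \<Rightarrow> 'k::field mat" where
  "mone n = (\<lambda>i j. if i = j \<and> i \<in> {1..n} then 1 else 0)"

text \<open>M(B,k): n x n matrices (indices 1..n) whose (i,j)-entries vanish for (i,j) not in B
 (entries outside the index range are 0, as B is a subset of {1..n} x {1..n}).\<close>
definition SMA :: "(nat \<times> nat) set \<Rightarrow> 'k::field mat set" where
  "SMA B = {M. \<forall>i j. (i, j) \<notin> B \<longrightarrow> M i j = 0}"

abbreviation full_mat :: "nat \<Rightarrow> 'k::field mat set" where
  "full_mat m \<equiv> SMA ({1..m} \<times> {1..m})"

definition prod_mat :: "nat list \<Rightarrow> (nat \<Rightarrow> 'k::field mat) set" where
  "prod_mat ns = {F. (\<forall>j. j \<ge> length ns \<longrightarrow> F j = (\<lambda>_ _. 0))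
                   \<and> (\<forall>j < length ns. F j \<in> full_mat (ns ! j))}"

definition padd :: "(nat \<Rightarrow> 'k::field mat) \<Rightarrow> (nat \<Rightarrow> 'k mat) \<Rightarrow> (nat \<Rightarrow> 'k mat)" where
  "padd F G = (\<lambda>j. madd (F j) (G j))"

definition psmult :: "'k::field \<Rightarrow> (nat \<Rightarrow> 'k mat) \<Rightarrow> (nat \<Rightarrow> 'k mat)" where
  "psmult c F = (\<lambda>j. msmult c (F j))"

definition pmult :: "nat list \<Rightarrow> (nat \<Rightarrow> 'k::field mat) \<Rightarrow> (nat \<Rightarrow> 'k mat) \<Rightarrow> (nat \<Rightarrow> 'k mat)" where
  "pmult ns F G = (\<lambda>j. if j < length ns then mmult (ns ! j) (F j) (G j) else (\<lambda>_ _. 0))"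

definition pone :: "nat list \<Rightarrow> (nat \<Rightarrow> 'k::field mat)" where
  "pone ns = (\<lambda>j. if j < length ns then mone (ns ! j) else (\<lambda>_ _. 0))"

definition is_partition_list :: "nat set list \<Rightarrow> nat \<Rightarrow> bool" where
  "is_partition_list Is n \<longleftrightarrow>
     (\<forall>j < length Is. Is ! j \<noteq> {})
   \<and> (\<forall>j < length Is. \<forall>l < length Is. j \<noteq> l \<longrightarrow> Is ! j \<inter> Is ! l = {})
   \<and> \<Union> (set Is) = {1..n}"

definition block_union :: "nat set list \<Rightarrow> (nat \<times> nat) set" where
  "block_union Is = (\<Union>I\<in>set Is. I \<times> I)"

end

(* B is a preorder on {1..n}, and M(B,k) is spanned by the matrix units e_pq with (p,q) in B.

   If B is symmetric, it is an equivalence relation whose classes form the partition; M(B,k) is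
   the product of the full matrix algebras on the classes, and b |-> (x |-> tr(x b)) is an
   isomorphism of left modules from M(B,k) onto its dual.  Symmetry is what makes it onto: the
   functional f comes from the matrix with (q,p)-entry f(e_pq).

   Conversely, if (i,j) is in B but (j,i) is not, the functional f = (x |-> x_jj) is annihilated
   by e_ij.  A module isomorphism onto the dual maps some m to f, and then e_ij m = 0, i.e. the
   j-th row of m vanishes.  Hence also e_jj m = 0, although e_jj fixes f, which is nonzero. *)

theory Submission
  imports Defs
begin

definition mat_unit :: "nat \<Rightarrow> nat \<Rightarrow> 'k::field mat" where
  "mat_unit p q = (\<lambda>i j. if i = p \<and> j = q then 1 else 0)"

lemma mat_unit_in_SMA: "(p, q) \<in> B \<Longrightarrow> mat_unit p q \<in> SMA B"
  by (auto simp: mat_unit_def SMA_def)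

lemma zero_in_SMA: "(\<lambda>_ _. 0) \<in> SMA B"
  by (simp add: SMA_def)

lemma madd_in_SMA: "x \<in> SMA B \<Longrightarrow> y \<in> SMA B \<Longrightarrow> madd x y \<in> SMA B"
  by (simp add: SMA_def madd_def)

lemma msmult_in_SMA: "x \<in> SMA B \<Longrightarrow> msmult c x \<in> SMA B"
  by (simp add: SMA_def msmult_def)

lemma msmult_zero_left: "msmult 0 x = (\<lambda>_ _. 0)"
  by (simp add: msmult_def)

lemma mmult_in_SMA:
  assumes "trans B" and x: "x \<in> SMA B" and y: "y \<in> SMA B"
  shows "mmult n x y \<in> SMA B"
  unfolding SMA_def mem_Collect_eq
proof (intro allI impI)
  fix i j assume ij: "(i, j) \<notin> B"
  have zero: "x i l * y l j = 0" for l
  proof (cases "(i, l) \<in> B")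
    case True
    then have "(l, j) \<notin> B" using ij \<open>trans B\<close> by (meson transD)
    then show ?thesis using y by (simp add: SMA_def)
  next
    case False
    then show ?thesis using x by (simp add: SMA_def)
  qed
  show "mmult n x y i j = 0"
    by (simp add: mmult_def zero)
qed

lemma mmult_mat_unit_left:
  assumes "q \<in> {1..n}"
  shows "mmult n (mat_unit p q) M = (\<lambda>i j. if i = p then M q j else 0)"
proof (intro ext)
  fix i j
  have "mmult n (mat_unit p q) M i j = (\<Sum>l\<in>{1..n}. if l = q then (if i = p then M l j else 0) else 0)"
    unfolding mmult_def by (intro sum.cong) (auto simp: mat_unit_def)
  also have "\<dots> = (if i = p then M q j else 0)"
    using assms by simp
  finally show "mmult n (mat_unit p q) M i j = (if i = p then M q j else 0)" .
qed

lemma mmult_mat_unit_right: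
  assumes "p \<in> {1..n}"
  shows "mmult n M (mat_unit p q) = (\<lambda>i j. if j = q then M i p else 0)"
proof (intro ext)
  fix i j
  have "mmult n M (mat_unit p q) i j = (\<Sum>l\<in>{1..n}. if l = p then (if j = q then M i l else 0) else 0)"
    unfolding mmult_def by (intro sum.cong) (auto simp: mat_unit_def)
  also have "\<dots> = (if j = q then M i p else 0)"
    using assms by simp
  finally show "mmult n M (mat_unit p q) i j = (if j = q then M i p else 0)" .
qed

lemma is_frobenius_dual_annihilator:
  assumes frob: "is_frobenius A add sm mul" and f: "f \<in> dual_space A add sm"
    and mul_closed: "\<forall>x\<in>A. \<forall>y\<in>A. mul x y \<in> A" and sm_closed: "\<forall>c. \<forall>x\<in>A. sm c x \<in> A"
  obtains m where "m \<in> A"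
    and "\<And>a. a \<in> A \<Longrightarrow> dual_lact A mul a f = (\<lambda>_. 0) \<longleftrightarrow> mul a m = sm 0 m"
proof -
  obtain \<phi> :: "'a \<Rightarrow> 'a \<Rightarrow> 'b" where bij: "bij_betw \<phi> A (dual_space A add sm)"
    and smult: "\<forall>c. \<forall>x\<in>A. \<phi> (sm c x) = (\<lambda>z. c * \<phi> x z)"
    and act: "\<forall>a\<in>A. \<forall>b\<in>A. \<phi> (mul a b) = dual_lact A mul a (\<phi> b)"
    using frob unfolding is_frobenius_def by blast
  obtain m where m: "m \<in> A" and fm: "\<phi> m = f"
    using bij f by (metis bij_betw_iff_bijections)
  have "dual_lact A mul a f = (\<lambda>_. 0) \<longleftrightarrow> mul a m = sm 0 m" if a: "a \<in> A" for a
  proof -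
    have "dual_lact A mul a f = \<phi> (mul a m)" using act a m fm by simp
    moreover have "\<phi> (sm 0 m) = (\<lambda>_. 0)" using smult m by simp
    moreover have "inj_on \<phi> A" using bij by (rule bij_betw_imp_inj_on)
    ultimately show ?thesis
      using mul_closed sm_closed a m by (metis inj_onD)
  qed
  with m show thesis using that by blast
qed

lemma sym_if_is_frobenius_SMA:
  assumes frob: "is_frobenius (SMA B :: 'k::field mat set) madd msmult (mmult n)"
    and sub: "B \<subseteq> {1..n} \<times> {1..n}" and refl: "refl_on {1..n} B" and trans: "trans B"
  shows "sym B"
proof (rule symI, rule ccontr)
  fix i j assume ij: "(i, j) \<in> B" and ji: "(j, i) \<notin> B"
  let ?A = "SMA B :: 'k mat set"
  define f :: "'k mat \<Rightarrow> 'k" where "f x = (if x \<in> ?A then x j j else 0)" for x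
  have j: "j \<in> {1..n}" using ij sub by auto
  then have jj: "(j, j) \<in> B" using refl by (simp add: refl_on_def)
  have act: "dual_lact ?A (mmult n) (mat_unit p j) f = (\<lambda>x. if x \<in> ?A then x j p else 0)"
    if pj: "(p, j) \<in> B" for p
  proof
    fix x
    have "p \<in> {1..n}" using pj sub by auto
    moreover have "x \<in> ?A \<Longrightarrow> mmult n x (mat_unit p j) \<in> ?A"
      by (rule mmult_in_SMA[OF trans _ mat_unit_in_SMA[OF pj]])
    ultimately show "dual_lact ?A (mmult n) (mat_unit p j) f x = (if x \<in> ?A then x j p else 0)"
      by (simp add: dual_lact_def f_def mmult_mat_unit_right)
  qed
  have "f \<in> dual_space ?A madd msmult"
    by (auto simp: dual_space_def f_def madd_in_SMA msmult_in_SMA) (simp_all add: madd_def msmult_def)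
  then obtain m where m: "m \<in> ?A"
    and ann: "\<And>a. a \<in> ?A \<Longrightarrow> dual_lact ?A (mmult n) a f = (\<lambda>_. 0) \<longleftrightarrow> mmult n a m = msmult 0 m"
    by (rule is_frobenius_dual_annihilator[OF frob])
      (auto intro: mmult_in_SMA[OF trans] msmult_in_SMA)
  have "dual_lact ?A (mmult n) (mat_unit i j) f = (\<lambda>_. 0)"
    using act[OF ij] ji by (auto simp: SMA_def)
  then have "mmult n (mat_unit i j) m = (\<lambda>_ _. 0)"
    using ann[OF mat_unit_in_SMA[OF ij]] by (simp add: msmult_zero_left)
  then have "m j v = 0" for v
    by (simp add: mmult_mat_unit_left[OF j] fun_eq_iff) meson
  then have "mmult n (mat_unit j j) m = msmult 0 m"
    by (simp add: mmult_mat_unit_left[OF j] msmult_zero_left fun_eq_iff)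
  then have "dual_lact ?A (mmult n) (mat_unit j j) f = (\<lambda>_. 0)"
    using ann[OF mat_unit_in_SMA[OF jj]] by blast
  then have "(mat_unit j j :: 'k mat) j j = 0"
    using act[OF jj] mat_unit_in_SMA[OF jj] by (metis (mono_tags, lifting))
  then show False by (simp add: mat_unit_def)
qed

lemma dual_space_SMA_expansion:
  fixes f :: "'k::field mat \<Rightarrow> 'k"
  assumes f: "f \<in> dual_space (SMA B) madd msmult" and "finite B" and x: "x \<in> SMA B"
  shows "f x = (\<Sum>(p, q)\<in>B. x p q * f (mat_unit p q))"
proof -
  define restr where "restr S = (\<lambda>i j. if (i, j) \<in> S then x i j else 0)" for S
  have add: "f (madd y z) = f y + f z" if "y \<in> SMA B" "z \<in> SMA B" for y z
    using f that by (simp add: dual_space_def)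
  have smult: "f (msmult c y) = c * f y" if "y \<in> SMA B" for y c
    using f that by (simp add: dual_space_def)
  have "f (restr S) = (\<Sum>(p, q)\<in>S. x p q * f (mat_unit p q))" if "finite S" "S \<subseteq> B" for S
    using that
  proof (induction S rule: finite_subset_induct')
    case empty
    show ?case
      using smult[OF zero_in_SMA, of 0] by (simp add: restr_def msmult_zero_left)
  next
    case (insert s S)
    obtain p q where s: "s = (p, q)" by fastforce
    have "restr (insert s S) = madd (msmult (x p q) (mat_unit p q)) (restr S)"
      using insert s by (auto simp: restr_def madd_def msmult_def mat_unit_def fun_eq_iff)
    moreover have "restr S \<in> SMA B" using insert by (auto simp: restr_def SMA_def)
    moreover have "(mat_unit p q :: 'k mat) \<in> SMA B" using insert s by (simp add: mat_unit_in_SMA)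
    ultimately show ?case
      using insert s by (simp add: add smult msmult_in_SMA)
  qed
  moreover have "restr B = x" using x by (auto simp: restr_def SMA_def fun_eq_iff)
  ultimately show ?thesis using \<open>finite B\<close> by blast
qed

definition trace_pairing :: "nat \<Rightarrow> 'k::field mat \<Rightarrow> 'k mat \<Rightarrow> 'k" where
  "trace_pairing n x b = (\<Sum>p\<in>{1..n}. \<Sum>q\<in>{1..n}. x p q * b q p)"

lemma trace_pairing_mmult: "trace_pairing n x (mmult n a b) = trace_pairing n (mmult n x a) b"
proof -
  have "trace_pairing n x (mmult n a b) = (\<Sum>p\<in>{1..n}. \<Sum>q\<in>{1..n}. \<Sum>l\<in>{1..n}. x p q * a q l * b l p)"
    by (simp add: trace_pairing_def mmult_def sum_distrib_left mult.assoc)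
  also have "\<dots> = (\<Sum>p\<in>{1..n}. \<Sum>l\<in>{1..n}. \<Sum>q\<in>{1..n}. x p q * a q l * b l p)"
    by (intro sum.cong refl sum.swap)
  also have "\<dots> = trace_pairing n (mmult n x a) b"
    by (simp add: trace_pairing_def mmult_def sum_distrib_right)
  finally show ?thesis .
qed

lemma trace_pairing_mat_unit:
  assumes "p \<in> {1..n}" and "q \<in> {1..n}"
  shows "trace_pairing n (mat_unit q p) b = b p q"
proof -
  have "trace_pairing n (mat_unit q p) b = (\<Sum>p'\<in>{1..n}. (mmult n (mat_unit q p) b) p' p')"
    by (simp add: trace_pairing_def mmult_def)
  also have "\<dots> = b p q"
    using assms by (simp add: mmult_mat_unit_left)
  finally show ?thesis .
qed

lemma trace_pairing_madd: "trace_pairing n (madd x y) b = trace_pairing n x b + trace_pairing n y b"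
  by (simp add: trace_pairing_def madd_def distrib_right sum.distrib)

lemma trace_pairing_msmult: "trace_pairing n (msmult c x) b = c * trace_pairing n x b"
  by (simp add: trace_pairing_def msmult_def sum_distrib_left mult.assoc)

definition trace_functional :: "nat \<Rightarrow> 'k::field mat set \<Rightarrow> 'k mat \<Rightarrow> 'k mat \<Rightarrow> 'k" where
  "trace_functional n A b = (\<lambda>x. if x \<in> A then trace_pairing n x b else 0)"

lemma trace_functional_in_dual_space:
  "trace_functional n (SMA B) b \<in> dual_space (SMA B) madd msmult"
  by (simp add: dual_space_def trace_functional_def madd_in_SMA msmult_in_SMA
      trace_pairing_madd trace_pairing_msmult)

lemma trace_functional_madd:
  "trace_functional n A (madd b c) = (\<lambda>x. trace_functional n A b x + trace_functional n A c x)"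
  by (auto simp: trace_functional_def trace_pairing_def madd_def distrib_left sum.distrib)

lemma trace_functional_msmult:
  "trace_functional n A (msmult c b) = (\<lambda>x. c * trace_functional n A b x)"
  by (auto simp: trace_functional_def trace_pairing_def msmult_def sum_distrib_left ac_simps)

lemma trace_functional_mmult:
  assumes "trans B" and "a \<in> SMA B"
  shows "trace_functional n (SMA B) (mmult n a b)
    = dual_lact (SMA B) (mmult n) a (trace_functional n (SMA B) b)"
  using mmult_in_SMA[OF assms(1) _ assms(2)]
  by (auto simp: trace_functional_def dual_lact_def trace_pairing_mmult)

lemma inj_on_trace_functional:
  assumes "sym B" and "B \<subseteq> {1..n} \<times> {1..n}"
  shows "inj_on (trace_functional n (SMA B)) (SMA B :: 'k::field mat set)"
proof
  fix b c :: "'k mat" assume b: "b \<in> SMA B" and c: "c \<in> SMA B"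
    and eq: "trace_functional n (SMA B) b = trace_functional n (SMA B) c"
  have "b p q = c p q" for p q
  proof (cases "(p, q) \<in> B")
    case True
    then have "(mat_unit q p :: 'k mat) \<in> SMA B" using \<open>sym B\<close> by (simp add: mat_unit_in_SMA symD)
    moreover have pq: "p \<in> {1..n}" "q \<in> {1..n}" using True assms(2) by auto
    ultimately show ?thesis
      using fun_cong[OF eq, of "mat_unit q p"]
      by (simp add: trace_functional_def trace_pairing_mat_unit[OF pq])
  next
    case False
    then show ?thesis using b c by (simp add: SMA_def)
  qed
  then show "b = c" by blast
qed

lemma dual_space_SMA_eq_trace_functional:
  fixes f :: "'k::field mat \<Rightarrow> 'k"
  assumes "sym B" and sub: "B \<subseteq> {1..n} \<times> {1..n}" and f: "f \<in> dual_space (SMA B) madd msmult"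
  shows "f \<in> trace_functional n (SMA B) ` SMA B"
proof -
  define b :: "'k mat" where "b q p = (if (q, p) \<in> B then f (mat_unit p q) else 0)" for q p
  have "f x = trace_functional n (SMA B) b x" for x
  proof (cases "x \<in> SMA B")
    case False
    then show ?thesis using f by (simp add: dual_space_def trace_functional_def)
  next
    case x: True
    have "finite B" using sub by (rule finite_subset) simp
    then have "f x = (\<Sum>(p, q)\<in>B. x p q * b q p)"
      using dual_space_SMA_expansion[OF f _ x] \<open>sym B\<close> by (auto simp: b_def symD intro: sum.cong)
    also have "\<dots> = (\<Sum>(p, q)\<in>{1..n} \<times> {1..n}. x p q * b q p)"
      using x sub by (intro sum.mono_neutral_left) (auto simp: SMA_def)
    also have "\<dots> = trace_functional n (SMA B) b x"
      using x by (simp add: trace_functional_def trace_pairing_def sum.cartesian_product)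
    finally show ?thesis .
  qed
  moreover have "b \<in> SMA B" by (simp add: b_def SMA_def)
  ultimately show ?thesis by blast
qed

lemma is_frobenius_SMA_if_sym:
  assumes "sym B" and "trans B" and "B \<subseteq> {1..n} \<times> {1..n}"
  shows "is_frobenius (SMA B :: 'k::field mat set) madd msmult (mmult n)"
  unfolding is_frobenius_def
proof (intro exI conjI)
  let ?\<phi> = "trace_functional n (SMA B) :: 'k mat \<Rightarrow> 'k mat \<Rightarrow> 'k"
  show "bij_betw ?\<phi> (SMA B) (dual_space (SMA B) madd msmult)"
    unfolding bij_betw_def
    using assms inj_on_trace_functional trace_functional_in_dual_space dual_space_SMA_eq_trace_functional
    by blast
qed (simp_all add: trace_functional_madd trace_functional_msmult trace_functional_mmult assms)

lemma sym_block_union: "sym (block_union Is)"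
  by (auto simp: block_union_def intro: symI)

lemma ex_partition_list_if_equiv:
  assumes eq: "equiv {1..n} B"
  shows "\<exists>Is. is_partition_list Is n \<and> B = block_union Is"
proof -
  have "finite ({1..n} // B)"
    using eq by (intro finite_quotient) (auto dest: equiv_type)
  then obtain Is where set: "set Is = {1..n} // B" and dist: "distinct Is"
    using finite_distinct_list by blast
  have "is_partition_list Is n"
    unfolding is_partition_list_def
  proof (intro conjI allI impI)
    show "Is ! j \<noteq> {}" if "j < length Is" for j
      using that set in_quotient_imp_non_empty[OF eq] nth_mem by blast
    show "Is ! j \<inter> Is ! l = {}" if "j < length Is" "l < length Is" "j \<noteq> l" for j l
      using that set dist quotient_disj[OF eq] nth_mem by (metis nth_eq_iff_index_eq)
    show "\<Union> (set Is) = {1..n}"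
      using set Union_quotient[OF eq] by simp
  qed
  moreover have "B = block_union Is"
  proof
    show "B \<subseteq> block_union Is"
    proof
      fix s assume s: "s \<in> B"
      obtain a b where ab: "s = (a, b)" by fastforce
      have "a \<in> {1..n}" using s ab equiv_type[OF eq] by auto
      then have "B `` {a} \<in> set Is" using set by (simp add: quotientI)
      moreover have "a \<in> B `` {a}" "b \<in> B `` {a}"
        using equiv_class_self[OF eq \<open>a \<in> {1..n}\<close>] s ab by auto
      ultimately show "s \<in> block_union Is" using ab by (auto simp: block_union_def)
    qed
    show "block_union Is \<subseteq> B"
      using set in_quotient_imp_in_rel[OF eq] by (auto simp: block_union_def)
  qed
  ultimately show ?thesis by blast
qed

text \<open>The isomorphism with the product depends on a choice of enumeration en j of each block.\<close>

locale block_enumeration =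
  fixes Is :: "nat set list" and n :: nat and en :: "nat \<Rightarrow> nat \<Rightarrow> nat"
  assumes partition: "is_partition_list Is n"
    and bij_en: "\<And>j. j < length Is \<Longrightarrow> bij_betw (en j) {1..card (Is ! j)} (Is ! j)"
begin

lemma block_subset: "j < length Is \<Longrightarrow> Is ! j \<subseteq> {1..n}"
  using partition unfolding is_partition_list_def by (metis Union_upper nth_mem)

lemma block_unique: "j < length Is \<Longrightarrow> l < length Is \<Longrightarrow> p \<in> Is ! j \<Longrightarrow> p \<in> Is ! l \<Longrightarrow> j = l"
  using partition unfolding is_partition_list_def by blast

lemma mem_block_union_iff: "(p, q) \<in> block_union Is \<longleftrightarrow> (\<exists>j < length Is. p \<in> Is ! j \<and> q \<in> Is ! j)"
  unfolding block_union_def by (fastforce simp: in_set_conv_nth)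

lemma en_in_block: "j < length Is \<Longrightarrow> a \<in> {1..card (Is ! j)} \<Longrightarrow> en j a \<in> Is ! j"
  using bij_en by (meson bij_betwE)

lemma en_eq_iff:
  "j < length Is \<Longrightarrow> a \<in> {1..card (Is ! j)} \<Longrightarrow> b \<in> {1..card (Is ! j)} \<Longrightarrow> en j a = en j b \<longleftrightarrow> a = b"
  using bij_en by (meson bij_betw_imp_inj_on inj_on_eq_iff)

definition to_blocks :: "'k::field mat \<Rightarrow> nat \<Rightarrow> 'k mat" where
  "to_blocks M j = (\<lambda>a b. if j < length Is \<and> a \<in> {1..card (Is ! j)} \<and> b \<in> {1..card (Is ! j)}
     then M (en j a) (en j b) else 0)"

definition from_blocks :: "(nat \<Rightarrow> 'k::field mat) \<Rightarrow> 'k mat" where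
  "from_blocks F p q = (if (p, q) \<in> block_union Is
     then (let j = THE j. j < length Is \<and> p \<in> Is ! j
           in F j (inv_into {1..card (Is ! j)} (en j) p) (inv_into {1..card (Is ! j)} (en j) q))
     else 0)"

lemma to_blocks_inside:
  "j < length Is \<Longrightarrow> a \<in> {1..card (Is ! j)} \<Longrightarrow> b \<in> {1..card (Is ! j)} \<Longrightarrow> to_blocks M j a b = M (en j a) (en j b)"
  by (simp add: to_blocks_def)

lemma to_blocks_eq_0:
  "\<not> j < length Is \<or> a \<notin> {1..card (Is ! j)} \<or> b \<notin> {1..card (Is ! j)} \<Longrightarrow> to_blocks M j a b = 0"
  by (auto simp: to_blocks_def)

lemma to_blocks_madd: "to_blocks (madd M N) = padd (to_blocks M) (to_blocks N)"
  by (simp add: to_blocks_def padd_def madd_def fun_eq_iff)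

lemma to_blocks_msmult: "to_blocks (msmult c M) = psmult c (to_blocks M)"
  by (simp add: to_blocks_def psmult_def msmult_def fun_eq_iff)

lemma to_blocks_in_prod_mat: "to_blocks M \<in> prod_mat (map card Is)"
  by (auto simp: prod_mat_def to_blocks_def SMA_def)

lemma from_blocks_in_SMA: "from_blocks F \<in> SMA (block_union Is)"
  by (simp add: SMA_def from_blocks_def)

lemma inj_on_to_blocks: "inj_on to_blocks (SMA (block_union Is) :: 'k::field mat set)"
proof
  fix M N :: "'k mat"
  assume M: "M \<in> SMA (block_union Is)" and N: "N \<in> SMA (block_union Is)"
    and eq: "to_blocks M = to_blocks N"
  have "M p q = N p q" for p q
  proof (cases "(p, q) \<in> block_union Is")
    case True
    then obtain j where j: "j < length Is" "p \<in> Is ! j" "q \<in> Is ! j"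
      by (auto simp: mem_block_union_iff)
    then have "p \<in> en j ` {1..card (Is ! j)}" "q \<in> en j ` {1..card (Is ! j)}"
      using bij_betw_imp_surj_on[OF bij_en[OF j(1)]] by simp_all
    then obtain a b where ab: "a \<in> {1..card (Is ! j)}" "b \<in> {1..card (Is ! j)}"
      and "en j a = p" "en j b = q"
      by blast
    then show ?thesis
      using fun_cong[OF fun_cong[OF fun_cong[OF eq, of j], of a], of b]
      by (simp add: to_blocks_inside[OF j(1) ab])
  next
    case False
    then show ?thesis using M N by (simp add: SMA_def)
  qed
  then show "M = N" by blast
qed

lemma to_blocks_from_blocks:
  assumes F: "F \<in> prod_mat (map card Is)"
  shows "to_blocks (from_blocks F) = F"
proof (intro ext)
  fix j a b
  show "to_blocks (from_blocks F) j a b = F j a b"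
  proof (cases "j < length Is \<and> a \<in> {1..card (Is ! j)} \<and> b \<in> {1..card (Is ! j)}")
    case True
    then have j: "j < length Is" and ab: "a \<in> {1..card (Is ! j)}" "b \<in> {1..card (Is ! j)}" by auto
    have "(THE j'. j' < length Is \<and> en j a \<in> Is ! j') = j"
      using j en_in_block[OF j ab(1)] block_unique by blast
    moreover have "inv_into {1..card (Is ! j)} (en j) (en j c) = c" if "c \<in> {1..card (Is ! j)}" for c
      using bij_en[OF j] that by (simp add: bij_betw_def inv_into_f_f)
    moreover have "(en j a, en j b) \<in> block_union Is"
      using j ab en_in_block by (auto simp: mem_block_union_iff)
    ultimately show ?thesis
      using ab by (simp add: to_blocks_inside[OF j ab] from_blocks_def)
  next
    case out: False
    then have "to_blocks (from_blocks F) j a b = 0" by (blast intro: to_blocks_eq_0)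
    moreover have "F j a b = 0"
    proof (cases "j < length Is")
      case True
      then have "F j \<in> full_mat (card (Is ! j))" using F by (simp add: prod_mat_def)
      then show ?thesis using out True unfolding SMA_def by blast
    qed (use F in \<open>simp add: prod_mat_def\<close>)
    ultimately show ?thesis by simp
  qed
qed

lemma bij_betw_to_blocks:
  "bij_betw to_blocks (SMA (block_union Is) :: 'k::field mat set) (prod_mat (map card Is))"
  unfolding bij_betw_def
proof (intro conjI inj_on_to_blocks subset_antisym subsetI)
  fix F :: "nat \<Rightarrow> 'k mat" assume "F \<in> prod_mat (map card Is)"
  then show "F \<in> to_blocks ` SMA (block_union Is)"
    using to_blocks_from_blocks from_blocks_in_SMA by (metis image_eqI)
qed (auto simp: to_blocks_in_prod_mat)

lemma to_blocks_mmult: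
  assumes M: "M \<in> SMA (block_union Is)"
  shows "to_blocks (mmult n M N) = pmult (map card Is) (to_blocks M) (to_blocks N)"
proof (intro ext)
  fix j a b
  show "to_blocks (mmult n M N) j a b = pmult (map card Is) (to_blocks M) (to_blocks N) j a b"
  proof (cases "j < length Is \<and> a \<in> {1..card (Is ! j)} \<and> b \<in> {1..card (Is ! j)}")
    case True
    then have j: "j < length Is" and ab: "a \<in> {1..card (Is ! j)}" "b \<in> {1..card (Is ! j)}" by auto
    have "mmult n M N (en j a) (en j b) = (\<Sum>l\<in>Is ! j. M (en j a) l * N l (en j b))"
      unfolding mmult_def
    proof (rule sum.mono_neutral_right)
      have "(en j a, l) \<notin> block_union Is" if "l \<notin> Is ! j" for l
        unfolding mem_block_union_iff using en_in_block[OF j ab(1)] block_unique j that by blast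
      then show "\<forall>l\<in>{1..n} - Is ! j. M (en j a) l * N l (en j b) = 0"
        using M by (simp add: SMA_def)
    qed (use block_subset[OF j] in auto)
    also have "\<dots> = (\<Sum>c\<in>{1..card (Is ! j)}. M (en j a) (en j c) * N (en j c) (en j b))"
      by (rule sum.reindex_bij_betw[OF bij_en[OF j], symmetric])
    also have "\<dots> = (\<Sum>c\<in>{1..card (Is ! j)}. to_blocks M j a c * to_blocks N j c b)"
      using ab by (intro sum.cong refl) (simp add: to_blocks_inside[OF j])
    finally show ?thesis
      using j by (simp add: to_blocks_inside[OF j ab] pmult_def mmult_def)
  next
    case False
    then have out: "\<not> j < length Is \<or> a \<notin> {1..card (Is ! j)} \<or> b \<notin> {1..card (Is ! j)}" by blast
    then have zero: "to_blocks M j a l * to_blocks N j l b = 0" for l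
      using to_blocks_eq_0 by (metis mult_zero_left mult_zero_right)
    have "pmult (map card Is) (to_blocks M) (to_blocks N) j a b = 0"
      by (simp add: pmult_def mmult_def zero)
    moreover have "to_blocks (mmult n M N) j a b = 0"
      using out by (rule to_blocks_eq_0)
    ultimately show ?thesis by simp
  qed
qed

lemma to_blocks_mone: "to_blocks (mone n) = pone (map card Is)"
proof (intro ext)
  fix j a b
  show "to_blocks (mone n) j a b = pone (map card Is) j a b"
  proof (cases "j < length Is \<and> a \<in> {1..card (Is ! j)} \<and> b \<in> {1..card (Is ! j)}")
    case True
    then have j: "j < length Is" and ab: "a \<in> {1..card (Is ! j)}" "b \<in> {1..card (Is ! j)}" by auto
    then have "en j a \<in> {1..n}" using en_in_block block_subset by blast
    then show ?thesis
      using en_eq_iff[OF j ab] j ab by (auto simp: to_blocks_inside[OF j ab] pone_def mone_def)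
  next
    case False
    then have out: "\<not> j < length Is \<or> a \<notin> {1..card (Is ! j)} \<or> b \<notin> {1..card (Is ! j)}" by blast
    then show ?thesis
      using to_blocks_eq_0[OF out] by (auto simp: pone_def mone_def)
  qed
qed

lemma alg_iso_SMA_block_union:
  "alg_iso (SMA (block_union Is) :: 'k::field mat set) madd msmult (mmult n) (mone n)
     (prod_mat (map card Is)) padd psmult (pmult (map card Is)) (pone (map card Is))"
  unfolding alg_iso_def
  by (intro exI[of _ to_blocks] conjI bij_betw_to_blocks ballI allI
      to_blocks_madd to_blocks_msmult to_blocks_mmult to_blocks_mone)

end

lemma alg_iso_SMA_block_union_prod_mat:
  assumes "is_partition_list Is n"
  shows "alg_iso (SMA (block_union Is) :: 'k::field mat set) madd msmult (mmult n) (mone n)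
     (prod_mat (map card Is)) padd psmult (pmult (map card Is)) (pone (map card Is))"
proof -
  have "finite (Is ! j)" if "j < length Is" for j
    using assms that unfolding is_partition_list_def by (metis Union_upper finite_atLeastAtMost finite_subset nth_mem)
  then have "\<forall>j < length Is. \<exists>e. bij_betw e {1..card (Is ! j)} (Is ! j)"
    using ex_bij_betw_nat_finite_1 by blast
  then obtain en where "\<And>j. j < length Is \<Longrightarrow> bij_betw (en j) {1..card (Is ! j)} (Is ! j)"
    by metis
  then interpret block_enumeration Is n en
    using assms by unfold_locales
  show ?thesis by (rule alg_iso_SMA_block_union)
qed

theorem mainTheorem2:
  fixes B :: "(nat \<times> nat) set" and n :: nat
  assumes "n > 0"
    and "B \<subseteq> {1..n} \<times> {1..n}"
    and "\<forall>i\<in>{1..n}. (i, i) \<in> B"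
    and "\<forall>i j l. (i, j) \<in> B \<and> (j, l) \<in> B \<longrightarrow> (i, l) \<in> B"
  shows "(is_frobenius (SMA B :: 'k::field mat set) madd msmult (mmult n)
           \<longleftrightarrow> (\<exists>Is. is_partition_list Is n \<and> B = block_union Is))
       \<and> (\<forall>Is. is_partition_list Is n \<and> B = block_union Is \<longrightarrow>
            alg_iso (SMA B :: 'k mat set) madd msmult (mmult n) (mone n)
                    (prod_mat (map card Is)) padd psmult (pmult (map card Is)) (pone (map card Is)))"
proof (intro conjI iffI allI impI)
  have sub: "B \<subseteq> {1..n} \<times> {1..n}" and refl: "refl_on {1..n} B" and trans: "trans B"
    using assms(2-4) unfolding refl_on_def trans_def by blast+
  show "\<exists>Is. is_partition_list Is n \<and> B = block_union Is"
    if frob: "is_frobenius (SMA B :: 'k mat set) madd msmult (mmult n)"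
  proof -
    have "sym B" using frob sub refl trans by (rule sym_if_is_frobenius_SMA)
    then have "equiv {1..n} B" using sub refl trans by (simp add: equivI)
    then show ?thesis by (rule ex_partition_list_if_equiv)
  qed
  show "is_frobenius (SMA B :: 'k mat set) madd msmult (mmult n)"
    if block: "\<exists>Is. is_partition_list Is n \<and> B = block_union Is"
  proof -
    obtain Is where "B = block_union Is" using block by blast
    then have "sym B" by (simp add: sym_block_union)
    then show ?thesis by (rule is_frobenius_SMA_if_sym[OF _ trans sub])
  qed
qed (simp add: alg_iso_SMA_block_union_prod_mat)

end
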